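(* Let $q$ be a prime power and $1\le s<t<k$ integers. If there exists a linear AOA$(s,t,k,q)$, then there exists a linear AOA$(k-t,k-s,k,q)$.
   Context: An orthogonal array OA$(t,k,v)$ (with $1\le t\le k$) is a $v^t\times k$ array with entries from a set $X$ of size $v$ such that, for every choice of $t$ of its columns, each $t$-tuple in $X^t$ appears exactly once as a row of the corresponding $v^t\times t$ subarray. For integers $1\le s\le t\le k$, an augmented orthogonal array AOA$(s,t,k,v)$ is a $v^t\times(k+1)$ array $A$ such that: (1) the first $k$ columns of $A$ form an OA$(t,k,v)$ on a symbol set $X$ of size $v$; (2) the last column of $A$ has entries from a set $Y$ of size $v^{t-s}$; (3) for any choice of $s$ of the first $k$ columns, these $s$ columns together with the last column contain every $(s+1)$-tuple of $X^s\times Y$ exactly once as a row. For a prime power $q$, an AOA$(s,t,k,q)$ is linear if $X=\mathbb{F}_q$, $Y=\mathbb{F}_q^{t-s}$, and its set of rows, regarded as vectors in $\mathbb{F}_q^{k}\times\mathbb{F}_q^{t-s}=\mathbb{F}_q^{k+t-s}$, is an $\mathbb{F}_q$-linear subspace. *)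

theory Defs
  imports "HOL-Library.FuncSet"
begin

text \<open>A row of an AOA(s,t,k,q) (linear case) is a vector of length k + (t - s):
  coordinates 0..k-1 are the first k columns (entries in F_q), coordinates
  k..k+(t-s)-1 together form the last column (an element of F_q^(t-s)).
  The array is represented by its set of rows (rows of an OA with t \<le> k are distinct).\<close>

definition proj_cols :: "nat set \<Rightarrow> 'a list \<Rightarrow> (nat \<Rightarrow> 'a)" where
  "proj_cols C r = restrict (\<lambda>i. r ! i) C"

definition is_lin_subspace :: "nat \<Rightarrow> ('a::field) list set \<Rightarrow> bool" where
  "is_lin_subspace n S \<longleftrightarrow>
     (\<forall>x\<in>S. length x = n) \<and> replicate n 0 \<in> S \<and>
     (\<forall>x\<in>S. \<forall>y\<in>S. map2 (+) x y \<in> S) \<and>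
     (\<forall>c. \<forall>x\<in>S. map ((*) c) x \<in> S)"

definition linear_AOA :: "nat \<Rightarrow> nat \<Rightarrow> nat \<Rightarrow> ('a::{field,finite}) list set \<Rightarrow> bool" where
  "linear_AOA s t k S \<longleftrightarrow>
     1 \<le> s \<and> s \<le> t \<and> t \<le> k \<and>
     is_lin_subspace (k + (t - s)) S \<and>
     (\<forall>C. C \<subseteq> {..<k} \<and> card C = t \<longrightarrow>
        bij_betw (proj_cols C) S (C \<rightarrow>\<^sub>E (UNIV :: 'a set))) \<and>
     (\<forall>C. C \<subseteq> {..<k} \<and> card C = s \<longrightarrow>
        bij_betw (proj_cols (C \<union> {k..<k + (t - s)})) S
                 ((C \<union> {k..<k + (t - s)}) \<rightarrow>\<^sub>E (UNIV :: 'a set)))"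

end

theory Submission
  imports Defs
begin

text \<open>The rows of the dual AOA are the dual space of the given one, with respect to the standard
  dot product on \<open>F\<^sub>q^(k + t - s)\<close>. A set \<open>I\<close> of coordinates on which a subspace projects
  bijectively (an information set) has a basis dual to the unit vectors on \<open>I\<close>; against this
  basis, a vector orthogonal to the subspace is determined by its coordinates outside \<open>I\<close>, and
  any such coordinates extend. So the information sets of the dual space are the complements of
  those of the original, and complementing the column sets in the definition of an AOA
  exchanges the parameters \<open>(s, t)\<close> with \<open>(k - t, k - s)\<close>.\<close>

definition dotp :: "nat \<Rightarrow> ('a::field) list \<Rightarrow> 'a list \<Rightarrow> 'a" where
  "dotp n x y = (\<Sum>m<n. x ! m * y ! m)"

definition dual_space :: "nat \<Rightarrow> ('a::field) list set \<Rightarrow> 'a list set" where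
  "dual_space n S = {y. length y = n \<and> (\<forall>c\<in>S. dotp n y c = 0)}"

lemma is_lin_subspace_length:
  "is_lin_subspace n S \<Longrightarrow> x \<in> S \<Longrightarrow> length x = n"
  unfolding is_lin_subspace_def by blast

lemma is_lin_subspace_sum:
  fixes S :: "('a::field) list set"
  assumes sub: "is_lin_subspace n S" and "finite A" and "\<And>a. a \<in> A \<Longrightarrow> v a \<in> S"
  shows "map (\<lambda>j. \<Sum>a\<in>A. f a * v a ! j) [0..<n] \<in> S"
  using assms(2,3)
proof (induction A rule: finite_induct)
  case empty
  have "map (\<lambda>j. \<Sum>a\<in>{}. f a * v a ! j) [0..<n] = replicate n 0"
    by (simp add: map_replicate_const)
  then show ?case using sub unfolding is_lin_subspace_def by simp
next
  case (insert x F)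
  let ?p = "map (\<lambda>j. \<Sum>a\<in>F. f a * v a ! j) [0..<n]"
  have vx: "v x \<in> S" and p: "?p \<in> S" using insert by auto
  have "map2 (+) (map ((*) (f x)) (v x)) ?p \<in> S"
    using vx p sub unfolding is_lin_subspace_def by blast
  moreover have "map2 (+) (map ((*) (f x)) (v x)) ?p
      = map (\<lambda>j. \<Sum>a\<in>insert x F. f a * v a ! j) [0..<n]"
    by (rule nth_equalityI) (auto simp: is_lin_subspace_length[OF sub vx] insert.hyps)
  ultimately show ?case by simp
qed

lemma is_lin_subspace_dual_space:
  fixes S :: "('a::field) list set"
  shows "is_lin_subspace n (dual_space n S)"
  unfolding is_lin_subspace_def
proof (intro conjI ballI allI)
  fix x y assume x: "x \<in> dual_space n S" and y: "y \<in> dual_space n S"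
  then have lx: "length x = n" and ly: "length y = n" unfolding dual_space_def by auto
  have "dotp n (map2 (+) x y) c = dotp n x c + dotp n y c" for c
    unfolding dotp_def using lx ly by (simp add: sum.distrib distrib_right)
  then show "map2 (+) x y \<in> dual_space n S"
    using x y lx ly unfolding dual_space_def by simp
next
  fix a :: 'a and x assume x: "x \<in> dual_space n S"
  then have lx: "length x = n" unfolding dual_space_def by auto
  have "dotp n (map ((*) a) x) c = a * dotp n x c" for c
    unfolding dotp_def using lx by (simp add: sum_distrib_left mult.assoc)
  then show "map ((*) a) x \<in> dual_space n S"
    using x lx unfolding dual_space_def by simp
qed (auto simp: dual_space_def dotp_def)

lemma information_set_basis:
  fixes S :: "('a::field) list set"
  assumes sub: "is_lin_subspace n S" and I: "I \<subseteq> {..<n}"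
    and bij: "bij_betw (proj_cols I) S (I \<rightarrow>\<^sub>E (UNIV :: 'a set))"
  obtains b where "\<And>i. b i \<in> S"
    and "\<And>i i'. i' \<in> I \<Longrightarrow> b i ! i' = (if i' = i then 1 else 0)"
    and "\<And>c j. c \<in> S \<Longrightarrow> j < n \<Longrightarrow> c ! j = (\<Sum>i\<in>I. c ! i * b i ! j)"
proof -
  have finI: "finite I" using I finite_subset by blast
  define e where "e i = restrict (\<lambda>i'. if i' = i then (1::'a) else 0) I" for i
  define b where "b i = inv_into S (proj_cols I) (e i)" for i
  have e_in: "e i \<in> I \<rightarrow>\<^sub>E UNIV" for i unfolding e_def by auto
  have bS: "b i \<in> S" for i
    using bij e_in[of i] unfolding b_def bij_betw_def by (metis inv_into_into)
  have pb: "proj_cols I (b i) = e i" for i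
    using bij e_in[of i] unfolding b_def bij_betw_def by (metis f_inv_into_f)
  have bval: "b i ! i' = (if i' = i then 1 else 0)" if "i' \<in> I" for i i'
    using that fun_cong[OF pb[of i], of i'] unfolding proj_cols_def e_def by simp
  have "c ! j = (\<Sum>i\<in>I. c ! i * b i ! j)" if c: "c \<in> S" and j: "j < n" for c j
  proof -
    define d where "d = map (\<lambda>j. \<Sum>i\<in>I. c ! i * b i ! j) [0..<n]"
    have dS: "d \<in> S" unfolding d_def using is_lin_subspace_sum[OF sub finI] bS by blast
    have "d ! x = c ! x" if x: "x \<in> I" for x
    proof -
      have "d ! x = (\<Sum>i\<in>I. c ! i * b i ! x)" unfolding d_def using x I by auto
      also have "\<dots> = (\<Sum>i\<in>I. if i = x then c ! i else 0)"
        by (rule sum.cong) (auto simp: bval x)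
      finally show ?thesis using x finI by simp
    qed
    then have "proj_cols I d = proj_cols I c" unfolding proj_cols_def by auto
    then have "d = c" using bij dS c unfolding bij_betw_def inj_on_def by metis
    then have "c ! j = d ! j" by simp
    then show ?thesis unfolding d_def using j by simp
  qed
  then show thesis using that bS bval by blast
qed

lemma dotp_split:
  fixes x y :: "('a::field) list"
  assumes "I \<subseteq> {..<n}"
  shows "dotp n x y = (\<Sum>m\<in>I. x ! m * y ! m) + (\<Sum>m\<in>{..<n} - I. x ! m * y ! m)"
  unfolding dotp_def using assms by (metis sum.subset_diff finite_lessThan add.commute)

lemma dotp_dual_basis:
  fixes z b :: "('a::field) list"
  assumes I: "I \<subseteq> {..<n}" and i: "i \<in> I"
    and b: "\<And>i'. i' \<in> I \<Longrightarrow> b ! i' = (if i' = i then 1 else 0)"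
  shows "dotp n z b = z ! i + (\<Sum>j\<in>{..<n} - I. z ! j * b ! j)"
proof -
  have "(\<Sum>m\<in>I. z ! m * b ! m) = (\<Sum>m\<in>I. if m = i then z ! m else 0)"
    by (rule sum.cong) (auto simp: b)
  also have "\<dots> = z ! i" using i I finite_subset[OF I] by simp
  finally show ?thesis using dotp_split[OF I, of z b] by simp
qed

lemma inj_on_proj_cols_dual_space:
  fixes S :: "('a::field) list set"
  assumes I: "I \<subseteq> {..<n}" and bS: "\<And>i. b i \<in> S"
    and bval: "\<And>i i'. i' \<in> I \<Longrightarrow> b i ! i' = (if i' = i then 1 else 0)"
  shows "inj_on (proj_cols ({..<n} - I)) (dual_space n S)"
proof (rule inj_onI)
  fix y y' assume y: "y \<in> dual_space n S" and y': "y' \<in> dual_space n S"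
    and eq: "proj_cols ({..<n} - I) y = proj_cols ({..<n} - I) y'"
  have eqJ: "y ! j = y' ! j" if "j \<in> {..<n} - I" for j
    using fun_cong[OF eq, of j] that unfolding proj_cols_def by simp
  have eqI: "y ! i = y' ! i" if i: "i \<in> I" for i
  proof -
    have "dotp n y (b i) = dotp n y' (b i)"
      using y y' bS unfolding dual_space_def by auto
    then show ?thesis
      using eqJ dotp_dual_basis[OF I i bval, where z = y] dotp_dual_basis[OF I i bval, where z = y']
      by simp
  qed
  show "y = y'"
  proof (rule nth_equalityI)
    show "length y = length y'" using y y' unfolding dual_space_def by simp
    show "y ! m = y' ! m" if "m < length y" for m
      using that y eqI eqJ unfolding dual_space_def by (cases "m \<in> I") auto
  qed
qed

text \<open>The coordinates on \<open>I\<close> of the extension of \<open>z\<close> are chosen to make it orthogonal to the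
  basis vectors \<open>b i\<close>, hence to all of \<open>S\<close>.\<close>

lemma proj_cols_dual_space_surj:
  fixes S :: "('a::field) list set"
  assumes I: "I \<subseteq> {..<n}"
    and bval: "\<And>i i'. i' \<in> I \<Longrightarrow> b i ! i' = (if i' = i then 1 else 0)"
    and span: "\<And>c j. c \<in> S \<Longrightarrow> j < n \<Longrightarrow> c ! j = (\<Sum>i\<in>I. c ! i * b i ! j)"
    and z: "z \<in> ({..<n} - I) \<rightarrow>\<^sub>E (UNIV :: 'a set)"
  shows "\<exists>y\<in>dual_space n S. proj_cols ({..<n} - I) y = z"
proof
  define J where "J = {..<n} - I"
  define y where "y = map (\<lambda>m. if m \<in> J then z m else - (\<Sum>j\<in>J. z j * b m ! j)) [0..<n]"
  have yJ: "y ! m = z m" if "m \<in> J" for m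
    unfolding y_def J_def using that J_def by auto
  have yI: "y ! m = - (\<Sum>j\<in>J. z j * b m ! j)" if "m \<in> I" for m
    unfolding y_def J_def using that I by auto
  have "dotp n y c = 0" if c: "c \<in> S" for c
  proof -
    have "(\<Sum>m\<in>J. y ! m * c ! m) = (\<Sum>m\<in>J. \<Sum>i\<in>I. z m * (c ! i * b i ! m))"
      using yJ span[OF c] by (auto simp: J_def sum_distrib_left intro!: sum.cong)
    also have "\<dots> = (\<Sum>i\<in>I. \<Sum>j\<in>J. z j * (c ! i * b i ! j))"
      by (rule sum.swap)
    also have "\<dots> = - (\<Sum>m\<in>I. y ! m * c ! m)"
      using yI by (simp add: sum_negf[symmetric] sum_distrib_left sum_distrib_right
          mult.commute mult.left_commute)
    finally show ?thesis using dotp_split[OF I, of y c] unfolding J_def by simp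
  qed
  then show "y \<in> dual_space n S" unfolding dual_space_def y_def by simp
  show "proj_cols ({..<n} - I) y = z"
    using yJ z unfolding proj_cols_def J_def by (auto simp: PiE_def extensional_def)
qed

lemma bij_betw_proj_cols_dual_space:
  fixes S :: "('a::field) list set"
  assumes sub: "is_lin_subspace n S" and I: "I \<subseteq> {..<n}"
    and bij: "bij_betw (proj_cols I) S (I \<rightarrow>\<^sub>E (UNIV :: 'a set))"
  shows "bij_betw (proj_cols ({..<n} - I)) (dual_space n S) (({..<n} - I) \<rightarrow>\<^sub>E (UNIV :: 'a set))"
proof -
  obtain b where bS: "\<And>i. b i \<in> S"
    and bval: "\<And>i i'. i' \<in> I \<Longrightarrow> b i ! i' = (if i' = i then 1 else 0)"
    and span: "\<And>c j. c \<in> S \<Longrightarrow> j < n \<Longrightarrow> c ! j = (\<Sum>i\<in>I. c ! i * b i ! j)"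
    using information_set_basis[OF sub I bij] by blast
  have "proj_cols ({..<n} - I) ` dual_space n S = ({..<n} - I) \<rightarrow>\<^sub>E UNIV"
  proof
    show "proj_cols ({..<n} - I) ` dual_space n S \<subseteq> ({..<n} - I) \<rightarrow>\<^sub>E UNIV"
      by (simp add: proj_cols_def image_subset_iff)
    show "({..<n} - I) \<rightarrow>\<^sub>E UNIV \<subseteq> proj_cols ({..<n} - I) ` dual_space n S"
    proof
      fix z assume "z \<in> ({..<n} - I) \<rightarrow>\<^sub>E (UNIV :: 'a set)"
      then show "z \<in> proj_cols ({..<n} - I) ` dual_space n S"
        using proj_cols_dual_space_surj[OF I bval span] by blast
    qed
  qed
  then show ?thesis
    unfolding bij_betw_def using inj_on_proj_cols_dual_space[OF I bS bval] by blast
qed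

lemma linear_AOA_dual:
  fixes S :: "('a::{field,finite}) list set"
  assumes S: "linear_AOA s t k S" and "t < k"
  shows "linear_AOA (k - t) (k - s) k (dual_space (k + (t - s)) S)"
proof -
  define n where "n = k + (t - s)"
  have "1 \<le> s" and "s \<le> t" and sub: "is_lin_subspace n S"
    and OA: "\<And>C. C \<subseteq> {..<k} \<Longrightarrow> card C = t \<Longrightarrow>
      bij_betw (proj_cols C) S (C \<rightarrow>\<^sub>E UNIV)"
    and AOA: "\<And>C. C \<subseteq> {..<k} \<Longrightarrow> card C = s \<Longrightarrow>
      bij_betw (proj_cols (C \<union> {k..<n})) S ((C \<union> {k..<n}) \<rightarrow>\<^sub>E UNIV)"
    using S unfolding linear_AOA_def n_def by auto
  have card_compl: "card ({..<k} - C) = k - card C" if "C \<subseteq> {..<k}" for C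
    using that by (simp add: card_Diff_subset finite_subset)
  have "bij_betw (proj_cols C) (dual_space n S) (C \<rightarrow>\<^sub>E UNIV)"
    if C: "C \<subseteq> {..<k}" "card C = k - s" for C
  proof -
    let ?I = "({..<k} - C) \<union> {k..<n}"
    have "card ({..<k} - C) = s" using C card_compl \<open>s \<le> t\<close> \<open>t < k\<close> by simp
    then have "bij_betw (proj_cols ?I) S (?I \<rightarrow>\<^sub>E UNIV)" by (intro AOA) auto
    moreover have "?I \<subseteq> {..<n}" and "{..<n} - ?I = C" using C unfolding n_def by auto
    ultimately show ?thesis using bij_betw_proj_cols_dual_space[OF sub, of ?I] by simp
  qed
  moreover have "bij_betw (proj_cols (C \<union> {k..<n})) (dual_space n S) ((C \<union> {k..<n}) \<rightarrow>\<^sub>E UNIV)"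
    if C: "C \<subseteq> {..<k}" "card C = k - t" for C
  proof -
    have "card ({..<k} - C) = t" using C card_compl \<open>t < k\<close> by simp
    then have "bij_betw (proj_cols ({..<k} - C)) S (({..<k} - C) \<rightarrow>\<^sub>E UNIV)"
      by (intro OA) auto
    moreover have "{..<k} - C \<subseteq> {..<n}" and "{..<n} - ({..<k} - C) = C \<union> {k..<n}"
      using C unfolding n_def by auto
    ultimately show ?thesis using bij_betw_proj_cols_dual_space[OF sub, of "{..<k} - C"] by simp
  qed
  moreover have "k + ((k - s) - (k - t)) = n" using \<open>s \<le> t\<close> \<open>t < k\<close> unfolding n_def by simp
  ultimately have "linear_AOA (k - t) (k - s) k (dual_space n S)"
    using \<open>1 \<le> s\<close> \<open>s \<le> t\<close> \<open>t < k\<close> is_lin_subspace_dual_space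
    unfolding linear_AOA_def by auto
  then show ?thesis unfolding n_def .
qed

theorem theorem3p5:
  fixes s t k :: nat
  assumes "1 \<le> s" and "s < t" and "t < k"
    and "\<exists>S :: ('a::{field,finite}) list set. linear_AOA s t k S"
  shows "\<exists>S :: 'a list set. linear_AOA (k - t) (k - s) k S"
  using assms(3,4) linear_AOA_dual by blast

end
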